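(* Let $\xi>0$, $d>0$, $\delta>0$ and $n\in\mathbb{N}$ satisfy $\frac{d\xi^3-\delta}{2}n\geq1$. Let $H=(U\,\dot\cup\, V\,\dot\cup\, W,E)$ be a $3$-uniform hypergraph with $|U|=|V|=|W|=n$ such that $U,V,W$ are weakly $(\delta,d)$-quasirandom in $H$. Then at least $(1-\xi)3n$ vertices of $H$ can be covered by vertex-disjoint tight paths of length at least $\frac{d\xi^3-\delta}{2}n-2$.
   Context: For $V_1,V_2,V_3\subseteq V(H)$, $E(V_1,V_2,V_3)=\{(v_1,v_2,v_3)\in V_1\times V_2\times V_3: \{v_1,v_2,v_3\}\in E\}$ and $e(V_1,V_2,V_3)=|E(V_1,V_2,V_3)|$. The sets $V_1,V_2,V_3$ are weakly $(\delta,d)$-quasirandom in $H$ if for all $U_1\subseteq V_1,U_2\subseteq V_2,U_3\subseteq V_3$, $|e(U_1,U_2,U_3)-d|U_1||U_2||U_3||\leq\delta|V_1||V_2||V_3|$. A tight path of length $\ell$ (number of edges) is a 3-graph on distinct vertices $x_1,\dots,x_{\ell+2}$ with edges $x_ix_{i+1}x_{i+2}$, $i\in[\ell]$. *)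

theory Defs
  imports Complex_Main
begin

definition three_graph :: "'a set \<Rightarrow> 'a set set \<Rightarrow> bool" where
  "three_graph S E \<longleftrightarrow> (\<forall>e\<in>E. e \<subseteq> S \<and> card e = 3)"

definition triple_count :: "'a set set \<Rightarrow> 'a set \<Rightarrow> 'a set \<Rightarrow> 'a set \<Rightarrow> nat" where
  "triple_count E V1 V2 V3 = card {(v1, v2, v3). v1 \<in> V1 \<and> v2 \<in> V2 \<and> v3 \<in> V3 \<and> {v1, v2, v3} \<in> E}"

definition weakly_quasirandom ::
  "real \<Rightarrow> real \<Rightarrow> 'a set set \<Rightarrow> 'a set \<Rightarrow> 'a set \<Rightarrow> 'a set \<Rightarrow> bool" where
  "weakly_quasirandom \<delta> d E V1 V2 V3 \<longleftrightarrow>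
     (\<forall>U1 U2 U3. U1 \<subseteq> V1 \<longrightarrow> U2 \<subseteq> V2 \<longrightarrow> U3 \<subseteq> V3 \<longrightarrow>
        \<bar>real (triple_count E U1 U2 U3) - d * real (card U1) * real (card U2) * real (card U3)\<bar>
          \<le> \<delta> * real (card V1) * real (card V2) * real (card V3))"

text \<open>A tight path in H = (S,E), given as its vertex sequence x_1,...,x_{l+2};
  its length l is the number of edges, i.e. length xs - 2.\<close>
definition tight_path :: "'a set \<Rightarrow> 'a set set \<Rightarrow> 'a list \<Rightarrow> bool" where
  "tight_path S E xs \<longleftrightarrow> distinct xs \<and> length xs \<ge> 2 \<and> set xs \<subseteq> S \<and>
     (\<forall>i. i + 2 < length xs \<longrightarrow> {xs ! i, xs ! (i + 1), xs ! (i + 2)} \<in> E)"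

definition tight_path_length :: "'a list \<Rightarrow> nat" where
  "tight_path_length xs = length xs - 2"

end

theory Submission
  imports Defs
begin

text \<open>
  For \<open>A \<subseteq> U\<close>, \<open>B \<subseteq> V\<close>, \<open>C \<subseteq> W\<close> of common size \<open>m \<ge> \<xi> n\<close>, quasirandomness gives at least
  \<open>(d \<xi>\<^sup>3 - \<delta>) n\<^sup>3\<close> triples \<open>(a, b, c) \<in> A \<times> B \<times> C\<close> spanning an edge. Repeatedly discarding
  the triples through a pair (of \<open>A \<times> B\<close>, \<open>B \<times> C\<close> or \<open>C \<times> A\<close>) that lies in fewer than \<open>k\<close>
  triples costs fewer than \<open>3 (k - 1) m\<^sup>2\<close> triples, so if \<open>3 (k - 1) < (d \<xi>\<^sup>3 - \<delta>) n\<close> a nonempty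
  set of triples survives in which every pair of a triple extends in at least \<open>k\<close> ways. A tight
  path running through \<open>A\<close>, \<open>B\<close>, \<open>C\<close> cyclically can then be extended greedily up to \<open>3 k\<close>
  vertices, as the new vertex only has to avoid the fewer than \<open>k\<close> used vertices of its class.
  Removing such paths as long as \<open>m \<ge> \<xi> n\<close> leaves fewer than \<open>3 \<xi> n\<close> vertices uncovered.
\<close>

definition large_fibres :: "nat \<Rightarrow> ('b \<Rightarrow> 'c) set \<Rightarrow> 'b set \<Rightarrow> bool" where
  "large_fibres k \<Pi> G \<longleftrightarrow> (\<forall>\<pi>\<in>\<Pi>. \<forall>t\<in>G. k \<le> card {s\<in>G. \<pi> s = \<pi> t})"

lemma exists_subset_large_fibres:
  assumes "finite F" "finite \<Pi>"
  shows "\<exists>G\<subseteq>F. large_fibres k \<Pi> G \<and> card F \<le> card G + (k - 1) * (\<Sum>\<pi>\<in>\<Pi>. card (\<pi> ` F))"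
  using assms(1)
proof (induction "card F" arbitrary: F rule: less_induct)
  case less
  show ?case
  proof (cases "large_fibres k \<Pi> F")
    case True
    then show ?thesis by auto
  next
    case False
    then obtain \<pi> t where \<pi>: "\<pi> \<in> \<Pi>" and t: "t \<in> F" and small: "card {s\<in>F. \<pi> s = \<pi> t} < k"
      unfolding large_fibres_def by (auto simp: not_le)
    define S where "S = {s\<in>F. \<pi> s = \<pi> t}"
    have "S \<subseteq> F" "t \<in> S" using t by (auto simp: S_def)
    then have card_F: "card F = card (F - S) + card S"
      using less.prems by (metis card_Diff_subset card_mono finite_subset le_add_diff_inverse2)
    have "card S > 0" using \<open>t \<in> S\<close> \<open>S \<subseteq> F\<close> less.prems card_gt_0_iff finite_subset by blast
    then obtain G where G: "G \<subseteq> F - S" "large_fibres k \<Pi> G"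
      and card_G: "card (F - S) \<le> card G + (k - 1) * (\<Sum>\<rho>\<in>\<Pi>. card (\<rho> ` (F - S)))"
      using less.hyps[of "F - S"] less.prems card_F by auto
    \<comment> \<open>removing the small fibre \<open>S\<close> loses \<open>\<pi> t\<close> from \<open>\<pi> ` F\<close>\<close>
    have "(\<Sum>\<rho>\<in>\<Pi>. card (\<rho> ` (F - S))) < (\<Sum>\<rho>\<in>\<Pi>. card (\<rho> ` F))"
    proof (rule sum_strict_mono_ex1)
      show "\<forall>\<rho>\<in>\<Pi>. card (\<rho> ` (F - S)) \<le> card (\<rho> ` F)"
        using less.prems by (auto intro: card_mono)
      have "\<pi> ` (F - S) \<subseteq> \<pi> ` F - {\<pi> t}" by (auto simp: S_def)
      then have "\<pi> ` (F - S) \<subset> \<pi> ` F" using t by blast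
      then show "\<exists>\<rho>\<in>\<Pi>. card (\<rho> ` (F - S)) < card (\<rho> ` F)"
        using \<pi> less.prems by (meson finite_imageI psubset_card_mono)
    qed fact
    then have "Suc (\<Sum>\<rho>\<in>\<Pi>. card (\<rho> ` (F - S))) \<le> (\<Sum>\<rho>\<in>\<Pi>. card (\<rho> ` F))" by simp
    moreover have "card S \<le> k - 1" using small by (simp add: S_def)
    then have "card F \<le> card G + (k - 1) * Suc (\<Sum>\<rho>\<in>\<Pi>. card (\<rho> ` (F - S)))"
      using card_F card_G by simp
    ultimately have "card F \<le> card G + (k - 1) * (\<Sum>\<rho>\<in>\<Pi>. card (\<rho> ` F))"
      by (meson add_left_mono le_trans mult_le_mono2)
    with G show ?thesis by auto
  qed
qed

lemma card_residue_class:
  assumes "r < q"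
  shows "card {i. i < q * k \<and> i mod q = r} = k"
proof -
  have "{i. i < q * k \<and> i mod q = r} = (\<lambda>j. q * j + r) ` {..<k}"
  proof (intro equalityI subsetI)
    fix i assume "i \<in> {i. i < q * k \<and> i mod q = r}"
    then have "i = q * (i div q) + r" "i div q < k"
      using div_mult_mod_eq[of i q] by (auto simp: less_mult_imp_div_less mult.commute)
    then show "i \<in> (\<lambda>j. q * j + r) ` {..<k}" by blast
  next
    fix i assume "i \<in> (\<lambda>j. q * j + r) ` {..<k}"
    then obtain j where "j < k" "i = q * j + r" by blast
    moreover have "q * j + r < q * Suc j" using assms by simp
    moreover have "q * Suc j \<le> q * k" using \<open>j < k\<close> by (intro mult_le_mono2) simp
    ultimately show "i \<in> {i. i < q * k \<and> i mod q = r}" using assms by simp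
  qed
  moreover have "inj_on (\<lambda>j. q * j + r) {..<k}" using assms by (auto simp: inj_on_def)
  ultimately show ?thesis by (simp add: card_image)
qed

definition coloured_tight_path :: "('a \<Rightarrow> nat) \<Rightarrow> ('a \<times> 'a \<times> 'a) set \<Rightarrow> 'a list \<Rightarrow> bool" where
  "coloured_tight_path col R xs \<longleftrightarrow> distinct xs \<and> (\<forall>i<length xs. col (xs ! i) = i mod 3)
     \<and> (\<forall>i. i + 2 < length xs \<longrightarrow> (xs ! i, xs ! (i + 1), xs ! (i + 2)) \<in> R)"

lemma card_colour_class:
  assumes "coloured_tight_path col R xs"
  shows "card {x\<in>set xs. col x = r} = card {i. i < length xs \<and> i mod 3 = r}"
proof -
  have "{x\<in>set xs. col x = r} = (!) xs ` {i. i < length xs \<and> i mod 3 = r}"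
    using assms by (auto simp: coloured_tight_path_def in_set_conv_nth)
  moreover have "inj_on ((!) xs) {i. i < length xs \<and> i mod 3 = r}"
    using assms by (auto simp: coloured_tight_path_def intro: inj_on_nth)
  ultimately show ?thesis by (simp add: card_image)
qed

lemma coloured_tight_path_snoc:
  assumes path: "coloured_tight_path col R xs"
    and len: "3 \<le> length xs" "length xs < 3 * k"
    and next_colour: "\<And>a b c. (a, b, c) \<in> R \<Longrightarrow> col c = Suc (col b) mod 3"
    and extensions: "\<And>a b c. (a, b, c) \<in> R \<Longrightarrow> k \<le> card {z. (b, c, z) \<in> R}"
  shows "\<exists>z. coloured_tight_path col R (xs @ [z])"
proof -
  define j where "j = length xs"
  define a where "a = xs ! (j - 2)"
  define b where "b = xs ! (j - 1)"
  have "(xs ! (j - 3), xs ! (j - 3 + 1), xs ! (j - 3 + 2)) \<in> R"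
    using path len by (simp add: coloured_tight_path_def j_def)
  moreover have "j - 3 + 1 = j - 2" "j - 3 + 2 = j - 1" using len by (simp_all add: j_def)
  ultimately have "(xs ! (j - 3), a, b) \<in> R" by (simp add: a_def b_def)
  then have "k \<le> card {z. (a, b, z) \<in> R}" by (rule extensions)
  moreover have "card {x\<in>set xs. col x = j mod 3} < k"
  proof -
    \<comment> \<open>\<open>j\<close> itself is one of the \<open>k\<close> positions below \<open>3 k\<close> of its residue class\<close>
    have "{i. i < j \<and> i mod 3 = j mod 3} \<subset> {i. i < 3 * k \<and> i mod 3 = j mod 3}"
      using len by (auto simp: j_def)
    then have "card {i. i < j \<and> i mod 3 = j mod 3} < k"
      using psubset_card_mono[of "{i. i < 3 * k \<and> i mod 3 = j mod 3}"]
      by (simp add: card_residue_class)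
    then show ?thesis using card_colour_class[OF path] by (simp add: j_def)
  qed
  moreover have "col z = j mod 3" if "(a, b, z) \<in> R" for z
  proof -
    have "col b = (j - 1) mod 3" using path len by (simp add: coloured_tight_path_def b_def j_def)
    moreover have "Suc (j - 1) = j" using len by (simp add: j_def)
    ultimately show ?thesis using next_colour[OF that] by (metis mod_Suc_eq)
  qed
  ultimately have "\<not> {z. (a, b, z) \<in> R} \<subseteq> {x\<in>set xs. col x = j mod 3}"
    using card_mono[of "{x\<in>set xs. col x = j mod 3}" "{z. (a, b, z) \<in> R}"] by force
  then obtain z where z: "(a, b, z) \<in> R" "z \<notin> set xs"
    using \<open>\<And>z. (a, b, z) \<in> R \<Longrightarrow> col z = j mod 3\<close> by blast
  have "coloured_tight_path col R (xs @ [z])"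
    unfolding coloured_tight_path_def
  proof (intro conjI allI impI)
    show "distinct (xs @ [z])" using path z by (simp add: coloured_tight_path_def)
  next
    fix i assume "i < length (xs @ [z])"
    then show "col ((xs @ [z]) ! i) = i mod 3"
      using path z \<open>\<And>z. (a, b, z) \<in> R \<Longrightarrow> col z = j mod 3\<close>
      by (auto simp: coloured_tight_path_def nth_append j_def less_Suc_eq)
  next
    fix i assume "i + 2 < length (xs @ [z])"
    then consider "i + 2 < j" | "i = j - 2" unfolding j_def by fastforce
    then show "((xs @ [z]) ! i, (xs @ [z]) ! (i + 1), (xs @ [z]) ! (i + 2)) \<in> R"
    proof cases
      case 1
      then show ?thesis using path by (simp add: coloured_tight_path_def nth_append j_def)
    next
      case 2
      then have "i < j" "i + 1 = j - 1" "j - 1 < j" "i + 2 = j" using len by (simp_all add: j_def)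
      then show ?thesis using z 2 by (simp add: nth_append a_def b_def j_def)
    qed
  qed
  then show ?thesis ..
qed

lemma coloured_tight_path_of_length:
  assumes seed: "(a, b, c) \<in> R" "col a = 0" "col b = 1" "col c = 2" and "1 \<le> k"
    and next_colour: "\<And>a b c. (a, b, c) \<in> R \<Longrightarrow> col c = Suc (col b) mod 3"
    and extensions: "\<And>a b c. (a, b, c) \<in> R \<Longrightarrow> k \<le> card {z. (b, c, z) \<in> R}"
  shows "\<exists>xs. coloured_tight_path col R xs \<and> length xs = 3 * k"
proof -
  have "\<exists>xs. coloured_tight_path col R xs \<and> length xs = l" if "3 \<le> l" "l \<le> 3 * k" for l
    using that
  proof (induction l rule: nat_induct_at_least)
    case base
    have "coloured_tight_path col R [a, b, c]"
      unfolding coloured_tight_path_def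
    proof (intro conjI allI impI)
      show "distinct [a, b, c]" using seed by auto
    next
      fix i assume "i < length [a, b, c]"
      then consider "i = 0" | "i = 1" | "i = 2" by fastforce
      then show "col ([a, b, c] ! i) = i mod 3" using seed by cases auto
    next
      fix i assume "i + 2 < length [a, b, c]"
      then show "([a, b, c] ! i, [a, b, c] ! (i + 1), [a, b, c] ! (i + 2)) \<in> R" using seed by simp
    qed
    then show ?case by force
  next
    case (Suc l)
    then obtain xs where xs: "coloured_tight_path col R xs" "length xs = l" by auto
    then have "\<exists>z. coloured_tight_path col R (xs @ [z])"
      using coloured_tight_path_snoc[OF xs(1) _ _ next_colour extensions] Suc by simp
    then show ?case using xs(2) by fastforce
  qed
  then show ?thesis using \<open>1 \<le> k\<close> by simp
qed

lemma card_colour_class_of_length: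
  assumes "coloured_tight_path col R xs" "length xs = 3 * k" "r < 3"
  shows "card {x\<in>set xs. col x = r} = k"
  using card_colour_class[OF assms(1)] card_residue_class[OF assms(3)] assms(2) by simp

definition rot3 :: "'a \<times> 'a \<times> 'a \<Rightarrow> 'a \<times> 'a \<times> 'a" where
  "rot3 = (\<lambda>(a, b, c). (b, c, a))"

text \<open>The ordered windows of a tight path running through \<open>A\<close>, \<open>B\<close>, \<open>C\<close> cyclically are the
  rotations of triples in \<open>A \<times> B \<times> C\<close>.\<close>

definition cyclic_closure :: "('a \<times> 'a \<times> 'a) set \<Rightarrow> ('a \<times> 'a \<times> 'a) set" where
  "cyclic_closure G = G \<union> rot3 ` G \<union> rot3 ` rot3 ` G"

definition pair_projections :: "('a \<times> 'a \<times> 'a \<Rightarrow> 'a \<times> 'a) set" where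
  "pair_projections = {\<lambda>(a, b, c). (a, b), \<lambda>(a, b, c). (b, c), \<lambda>(a, b, c). (c, a)}"

lemma mem_cyclic_closure:
  "(a, b, c) \<in> cyclic_closure G \<longleftrightarrow> (a, b, c) \<in> G \<or> (c, a, b) \<in> G \<or> (b, c, a) \<in> G"
proof
  assume "(a, b, c) \<in> cyclic_closure G"
  then show "(a, b, c) \<in> G \<or> (c, a, b) \<in> G \<or> (b, c, a) \<in> G"
    by (auto simp: cyclic_closure_def rot3_def)
next
  have "rot3 (c, a, b) = (a, b, c)" "rot3 (rot3 (b, c, a)) = (a, b, c)" by (simp_all add: rot3_def)
  then show "(a, b, c) \<in> G \<or> (c, a, b) \<in> G \<or> (b, c, a) \<in> G \<Longrightarrow> (a, b, c) \<in> cyclic_closure G"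
    unfolding cyclic_closure_def by (metis UnCI imageI)
qed

lemma card_fibre_le_card_extensions:
  assumes "finite R" "\<sigma> ` G \<subseteq> R" "inj \<sigma>" "\<And>s. \<pi> s = (fst (\<sigma> s), fst (snd (\<sigma> s)))"
  shows "card {s\<in>G. \<pi> s = (b, c)} \<le> card {z. (b, c, z) \<in> R}"
proof (rule card_inj_on_le)
  show "inj_on (\<lambda>s. snd (snd (\<sigma> s))) {s\<in>G. \<pi> s = (b, c)}"
    using assms(3,4) by (auto simp: inj_on_def inj_def prod_eq_iff)
  show "(\<lambda>s. snd (snd (\<sigma> s))) ` {s\<in>G. \<pi> s = (b, c)} \<subseteq> {z. (b, c, z) \<in> R}"
    using assms(2,4) by (force simp: prod_eq_iff)
  have "{z. (b, c, z) \<in> R} \<subseteq> (\<lambda>t. snd (snd t)) ` R" by force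
  then show "finite {z. (b, c, z) \<in> R}" using assms(1) finite_surj by blast
qed

lemma card_extensions_cyclic_closure_ge:
  assumes "finite G" "large_fibres k pair_projections G" "(a, b, c) \<in> cyclic_closure G"
  shows "k \<le> card {z. (b, c, z) \<in> cyclic_closure G}"
proof -
  have fin: "finite (cyclic_closure G)" using assms(1) by (simp add: cyclic_closure_def)
  have inj_rot3: "inj rot3" by (auto simp: inj_def rot3_def)
  have sub: "id ` G \<subseteq> cyclic_closure G" "rot3 ` G \<subseteq> cyclic_closure G"
    "(rot3 \<circ> rot3) ` G \<subseteq> cyclic_closure G"
    by (auto simp: cyclic_closure_def image_comp)
  have large: "k \<le> card {s\<in>G. \<pi> s = \<pi> t}" if "\<pi> \<in> pair_projections" "t \<in> G" for \<pi> t
    using assms(2) that by (simp add: large_fibres_def)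
  consider "(a, b, c) \<in> G" | "(c, a, b) \<in> G" | "(b, c, a) \<in> G"
    using assms(3) unfolding mem_cyclic_closure by blast
  then show ?thesis
  proof cases
    case 1
    then have "k \<le> card {s\<in>G. (\<lambda>(a, b, c). (b, c)) s = (b, c)}"
      using large[of "\<lambda>(a, b, c). (b, c)" "(a, b, c)"] by (simp add: pair_projections_def)
    also have "\<dots> \<le> card {z. (b, c, z) \<in> cyclic_closure G}"
      by (rule card_fibre_le_card_extensions[OF fin sub(2) inj_rot3])
        (auto simp: rot3_def split: prod.splits)
    finally show ?thesis .
  next
    case 2
    then have "k \<le> card {s\<in>G. (\<lambda>(a, b, c). (c, a)) s = (b, c)}"
      using large[of "\<lambda>(a, b, c). (c, a)" "(c, a, b)"] by (simp add: pair_projections_def)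
    also have "\<dots> \<le> card {z. (b, c, z) \<in> cyclic_closure G}"
      by (rule card_fibre_le_card_extensions[OF fin sub(3) inj_compose[OF inj_rot3 inj_rot3]])
        (auto simp: rot3_def split: prod.splits)
    finally show ?thesis .
  next
    case 3
    then have "k \<le> card {s\<in>G. (\<lambda>(a, b, c). (a, b)) s = (b, c)}"
      using large[of "\<lambda>(a, b, c). (a, b)" "(b, c, a)"] by (simp add: pair_projections_def)
    also have "\<dots> \<le> card {z. (b, c, z) \<in> cyclic_closure G}"
      by (rule card_fibre_le_card_extensions[OF fin sub(1) inj_on_id]) (auto split: prod.splits)
    finally show ?thesis .
  qed
qed

lemma edge_of_cyclic_closure:
  assumes "(a, b, c) \<in> cyclic_closure G" "\<And>u v w. (u, v, w) \<in> G \<Longrightarrow> {u, v, w} \<in> E"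
  shows "{a, b, c} \<in> E"
  using assms(1) unfolding mem_cyclic_closure
  by (elim disjE) (auto dest: assms(2) simp: insert_commute)

lemma balanced_tight_path_of_large_fibres:
  assumes disj: "A \<inter> B = {}" "A \<inter> C = {}" "B \<inter> C = {}"
    and G: "finite G" "G \<subseteq> A \<times> B \<times> C" "(u, v, w) \<in> G" "large_fibres k pair_projections G"
    and edges: "\<And>a b c. (a, b, c) \<in> G \<Longrightarrow> {a, b, c} \<in> E"
    and "1 \<le> k"
  shows "\<exists>xs. tight_path (A \<union> B \<union> C) E xs \<and> length xs = 3 * k
     \<and> card (set xs \<inter> A) = k \<and> card (set xs \<inter> B) = k \<and> card (set xs \<inter> C) = k"
proof -
  define col :: "'a \<Rightarrow> nat"
    where "col x = (if x \<in> A then 0 else if x \<in> B then 1 else if x \<in> C then 2 else 3)" for x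
  have classes: "A = {x. col x = 0}" "B = {x. col x = 1}" "C = {x. col x = 2}"
    using disj by (auto simp: col_def)
  have next_colour: "col c = Suc (col b) mod 3" if "(a, b, c) \<in> cyclic_closure G" for a b c
    using that G(2) disj by (auto simp: mem_cyclic_closure col_def)
  have "(u, v, w) \<in> cyclic_closure G" "col u = 0" "col v = 1" "col w = 2"
    using G(2,3) classes by (auto simp: cyclic_closure_def)
  then have "\<exists>xs. coloured_tight_path col (cyclic_closure G) xs \<and> length xs = 3 * k"
    using \<open>1 \<le> k\<close> next_colour card_extensions_cyclic_closure_ge[OF G(1) G(4)]
    by (rule coloured_tight_path_of_length)
  then obtain xs where xs: "coloured_tight_path col (cyclic_closure G) xs" "length xs = 3 * k"
    by blast
  have "tight_path (A \<union> B \<union> C) E xs"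
    unfolding tight_path_def
  proof (intro conjI allI impI)
    show "distinct xs" using xs(1) by (simp add: coloured_tight_path_def)
    show "2 \<le> length xs" using xs(2) \<open>1 \<le> k\<close> by simp
    have "col x < 3" if "x \<in> set xs" for x
      using that xs(1) by (auto simp: coloured_tight_path_def in_set_conv_nth)
    moreover have "x \<in> A \<union> B \<union> C" if "col x < 3" for x
      using that by (simp add: col_def split: if_splits)
    ultimately show "set xs \<subseteq> A \<union> B \<union> C" by blast
  next
    fix i assume "i + 2 < length xs"
    then show "{xs ! i, xs ! (i + 1), xs ! (i + 2)} \<in> E"
      using xs(1) edges by (auto simp: coloured_tight_path_def intro: edge_of_cyclic_closure)
  qed
  moreover have "card (set xs \<inter> X) = k" if "X = {x. col x = r}" "r < 3" for X r
    using card_colour_class_of_length[OF xs that(2)] that(1) by (simp add: Int_def)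
  ultimately show ?thesis using xs(2) classes by auto
qed

lemma sum_pair_projections_le:
  assumes "T \<subseteq> A \<times> B \<times> C" "finite A" "finite B" "finite C"
  shows "(\<Sum>\<pi>\<in>pair_projections. card (\<pi> ` T)) \<le> card A * card B + card B * card C + card C * card A"
proof -
  have le: "card (\<pi> ` T) \<le> card X * card Y" if "\<pi> ` T \<subseteq> X \<times> Y" "finite X" "finite Y"
    for \<pi> :: "'a \<times> 'a \<times> 'a \<Rightarrow> 'a \<times> 'a" and X Y
    using that card_mono[OF finite_cartesian_product] by (metis card_cartesian_product)
  have sum_le: "(\<Sum>\<pi>\<in>{p, q, r}. f \<pi>) \<le> f p + f q + f r" for p q r and f :: "_ \<Rightarrow> nat"
    by (simp add: sum.insert_if)
  have "(\<Sum>\<pi>\<in>pair_projections. card (\<pi> ` T)) \<le> card ((\<lambda>(a, b, c). (a, b)) ` T)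
      + card ((\<lambda>(a, b, c). (b, c)) ` T) + card ((\<lambda>(a, b, c). (c, a)) ` T)"
    unfolding pair_projections_def by (rule sum_le)
  also have "\<dots> \<le> card A * card B + card B * card C + card C * card A"
    using assms by (intro add_mono le) auto
  finally show ?thesis .
qed

lemma balanced_tight_path_of_many_triples:
  assumes "finite A" "finite B" "finite C" "A \<inter> B = {}" "A \<inter> C = {}" "B \<inter> C = {}" "1 \<le> k"
    and many: "(k - 1) * (card A * card B + card B * card C + card C * card A) < triple_count E A B C"
  shows "\<exists>xs. tight_path (A \<union> B \<union> C) E xs \<and> length xs = 3 * k
     \<and> card (set xs \<inter> A) = k \<and> card (set xs \<inter> B) = k \<and> card (set xs \<inter> C) = k"
proof -
  define T where "T = {(a, b, c). a \<in> A \<and> b \<in> B \<and> c \<in> C \<and> {a, b, c} \<in> E}"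
  have T: "T \<subseteq> A \<times> B \<times> C" "finite T" "card T = triple_count E A B C"
    using assms(1-3) finite_subset[of T "A \<times> B \<times> C"] by (auto simp: T_def triple_count_def)
  have "finite pair_projections" by (simp add: pair_projections_def)
  then obtain G where G: "G \<subseteq> T" "large_fibres k pair_projections G"
    and card_T: "card T \<le> card G + (k - 1) * (\<Sum>\<pi>\<in>pair_projections. card (\<pi> ` T))"
    using exists_subset_large_fibres[OF T(2)] by blast
  have "(k - 1) * (\<Sum>\<pi>\<in>pair_projections. card (\<pi> ` T))
      \<le> (k - 1) * (card A * card B + card B * card C + card C * card A)"
    using sum_pair_projections_le[OF T(1) assms(1-3)] by (rule mult_le_mono2)
  then have "card G \<noteq> 0" using card_T many T(3) by linarith
  then have "G \<noteq> {}" by auto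
  then obtain u v w where "(u, v, w) \<in> G" by auto
  moreover have "finite G" using G(1) T(2) finite_subset by blast
  moreover have "{a, b, c} \<in> E" if "(a, b, c) \<in> G" for a b c using that G(1) by (auto simp: T_def)
  ultimately show ?thesis
    using balanced_tight_path_of_large_fibres[OF assms(4-6) _ _ _ G(2) _ assms(7)] G(1) T(1)
    by blast
qed

lemma tight_path_mono: "tight_path S E xs \<Longrightarrow> S \<subseteq> S' \<Longrightarrow> tight_path S' E xs"
  unfolding tight_path_def by blast

lemma triple_count_ge_if_weakly_quasirandom:
  fixes \<xi> d \<delta> :: real
  assumes qr: "weakly_quasirandom \<delta> d E U V W" and "A \<subseteq> U" "B \<subseteq> V" "C \<subseteq> W"
    and "0 \<le> d" "0 \<le> \<xi>" and large: "\<xi> * card U \<le> card A" "\<xi> * card V \<le> card B" "\<xi> * card W \<le> card C"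
  shows "(d * \<xi> ^ 3 - \<delta>) * card U * card V * card W \<le> triple_count E A B C"
proof -
  have "d * (\<xi> * card U) * (\<xi> * card V) * (\<xi> * card W) \<le> d * card A * card B * card C"
    using assms(5,6) large by (intro mult_mono) auto
  moreover have "\<bar>triple_count E A B C - d * card A * card B * card C\<bar> \<le> \<delta> * card U * card V * card W"
    using qr assms(2-4) unfolding weakly_quasirandom_def by blast
  moreover have "(d * \<xi> ^ 3 - \<delta>) * card U * card V * card W
      = d * (\<xi> * card U) * (\<xi> * card V) * (\<xi> * card W) - \<delta> * card U * card V * card W"
    by (simp add: power3_eq_cube algebra_simps)
  ultimately show ?thesis by linarith
qed

lemma balanced_tight_path_in_quasirandom:
  fixes \<xi> d \<delta> :: real
  assumes qr: "weakly_quasirandom \<delta> d E U V W"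
    and fin: "finite U" "finite V" "finite W"
    and disj: "U \<inter> V = {}" "U \<inter> W = {}" "V \<inter> W = {}"
    and card: "card U = n" "card V = n" "card W = n"
    and "0 \<le> \<xi>" "0 \<le> d" "1 \<le> k" and k_small: "3 * (real k - 1) < (d * \<xi> ^ 3 - \<delta>) * n"
    and sub: "A \<subseteq> U" "B \<subseteq> V" "C \<subseteq> W"
    and card_m: "card A = m" "card B = m" "card C = m" and large: "\<xi> * n \<le> m"
  shows "\<exists>xs. tight_path (U \<union> V \<union> W) E xs \<and> length xs = 3 * k \<and> set xs \<subseteq> A \<union> B \<union> C
     \<and> card (set xs \<inter> A) = k \<and> card (set xs \<inter> B) = k \<and> card (set xs \<inter> C) = k"
proof -
  have "m \<le> n" using card_mono[OF fin(1) sub(1)] card card_m by simp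
  have "n > 0" using k_small \<open>1 \<le> k\<close> by (cases "n = 0") auto
  have "real ((k - 1) * (m * m + m * m + m * m)) = 3 * (real k - 1) * m ^ 2"
    unfolding of_nat_mult of_nat_add of_nat_diff[OF \<open>1 \<le> k\<close>]
    by (simp add: power2_eq_square algebra_simps)
  also have "\<dots> \<le> 3 * (real k - 1) * n ^ 2"
    using \<open>1 \<le> k\<close> \<open>m \<le> n\<close> by (intro mult_left_mono power_mono) auto
  also have "\<dots> < (d * \<xi> ^ 3 - \<delta>) * n * n ^ 2"
    using k_small \<open>n > 0\<close> by (intro mult_strict_right_mono) auto
  also have "\<dots> \<le> triple_count E A B C"
    using triple_count_ge_if_weakly_quasirandom[OF qr sub \<open>0 \<le> d\<close> \<open>0 \<le> \<xi>\<close>] large card card_m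
    by (simp add: power2_eq_square algebra_simps)
  finally have "(k - 1) * (m * m + m * m + m * m) < triple_count E A B C"
    by (simp only: of_nat_less_iff)
  then have many: "(k - 1) * (card A * card B + card B * card C + card C * card A)
      < triple_count E A B C"
    unfolding card_m .
  have "finite A" "finite B" "finite C" using fin sub finite_subset by blast+
  moreover have "A \<inter> B = {}" "A \<inter> C = {}" "B \<inter> C = {}" using disj sub by blast+
  ultimately obtain xs where xs: "tight_path (A \<union> B \<union> C) E xs" "length xs = 3 * k"
    "card (set xs \<inter> A) = k" "card (set xs \<inter> B) = k" "card (set xs \<inter> C) = k"
    using balanced_tight_path_of_many_triples[OF _ _ _ _ _ _ \<open>1 \<le> k\<close> many] by metis
  have "tight_path (U \<union> V \<union> W) E xs" using sub by (intro tight_path_mono[OF xs(1)]) blast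
  moreover have "set xs \<subseteq> A \<union> B \<union> C" using xs(1) by (simp add: tight_path_def)
  ultimately show ?thesis using xs(2-5) by blast
qed

lemma greedy_balanced_cover:
  fixes \<mu> :: real and Q :: "'a list \<Rightarrow> bool"
  assumes fin: "finite U" "finite V" "finite W"
    and disj: "U \<inter> V = {}" "U \<inter> W = {}" "V \<inter> W = {}" and "0 < k"
    and step: "\<And>A B C. A \<subseteq> U \<Longrightarrow> B \<subseteq> V \<Longrightarrow> C \<subseteq> W \<Longrightarrow>
      card B = card A \<Longrightarrow> card C = card A \<Longrightarrow> \<mu> \<le> card A \<Longrightarrow> \<exists>xs. Q xs \<and> set xs \<subseteq> A \<union> B \<union> C
        \<and> card (set xs \<inter> A) = k \<and> card (set xs \<inter> B) = k \<and> card (set xs \<inter> C) = k"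
  shows "A \<subseteq> U \<Longrightarrow> B \<subseteq> V \<Longrightarrow> C \<subseteq> W \<Longrightarrow> card A = m \<Longrightarrow> card B = m \<Longrightarrow> card C = m \<Longrightarrow>
    \<exists>P. finite P \<and> (\<forall>p\<in>P. Q p \<and> set p \<subseteq> A \<union> B \<union> C)
      \<and> (\<forall>p\<in>P. \<forall>q\<in>P. p \<noteq> q \<longrightarrow> set p \<inter> set q = {})
      \<and> 3 * (m - \<mu>) \<le> card (\<Union>p\<in>P. set p)"
proof (induction m arbitrary: A B C rule: less_induct)
  case (less m)
  show ?case
  proof (cases "m < \<mu>")
    case True
    then show ?thesis by (intro exI[of _ "{}"]) simp
  next
    case False
    then have "\<exists>xs. Q xs \<and> set xs \<subseteq> A \<union> B \<union> C
        \<and> card (set xs \<inter> A) = k \<and> card (set xs \<inter> B) = k \<and> card (set xs \<inter> C) = k"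
      using step[OF less.prems(1-3)] less.prems(4-6) by simp
    then obtain xs where xs: "Q xs" "set xs \<subseteq> A \<union> B \<union> C"
      "card (set xs \<inter> A) = k" "card (set xs \<inter> B) = k" "card (set xs \<inter> C) = k"
      by blast
    have fin_ABC: "finite A" "finite B" "finite C"
      using fin less.prems(1-3) finite_subset by blast+
    have "k \<le> m" using xs(3) less.prems(4) card_mono[OF fin_ABC(1), of "set xs \<inter> A"] by simp
    have card_rest: "card (A - set xs) = m - k" "card (B - set xs) = m - k" "card (C - set xs) = m - k"
      using xs(3-5) less.prems(4-6) fin_ABC by (simp_all add: card_Diff_subset_Int Int_commute)
    obtain P where P: "finite P" "\<forall>p\<in>P. Q p \<and> set p \<subseteq> (A - set xs) \<union> (B - set xs) \<union> (C - set xs)"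
      "\<forall>p\<in>P. \<forall>q\<in>P. p \<noteq> q \<longrightarrow> set p \<inter> set q = {}"
      "3 * (real (m - k) - \<mu>) \<le> card (\<Union>p\<in>P. set p)"
    proof -
      have "m - k < m" using \<open>0 < k\<close> \<open>k \<le> m\<close> by simp
      moreover have "A - set xs \<subseteq> U" "B - set xs \<subseteq> V" "C - set xs \<subseteq> W"
        using less.prems(1-3) by auto
      ultimately show ?thesis using less.IH[OF _ _ _ _ card_rest] that by blast
    qed
    have disjoint_xs: "set xs \<inter> (\<Union>p\<in>P. set p) = {}" using P(2) by blast
    have "A \<inter> B = {}" "A \<inter> C = {}" "B \<inter> C = {}" using disj less.prems(1-3) by blast+
    then have "card (set xs \<inter> A \<union> set xs \<inter> B \<union> set xs \<inter> C)
        = card (set xs \<inter> A) + card (set xs \<inter> B) + card (set xs \<inter> C)"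
      by (subst card_Un_disjoint, auto)+
    moreover have "set xs \<inter> A \<union> set xs \<inter> B \<union> set xs \<inter> C = set xs" using xs(2) by blast
    ultimately have "card (set xs) = 3 * k" using xs(3-5) by simp
    then have "card (\<Union>p\<in>insert xs P. set p) = 3 * k + card (\<Union>p\<in>P. set p)"
      using disjoint_xs P(1) by (simp add: card_Un_disjoint)
    then have "3 * (m - \<mu>) \<le> card (\<Union>p\<in>insert xs P. set p)"
      using P(4) \<open>k \<le> m\<close> by (simp add: of_nat_diff algebra_simps)
    moreover have "\<forall>p\<in>insert xs P. \<forall>q\<in>insert xs P. p \<noteq> q \<longrightarrow> set p \<inter> set q = {}"
      using P(3) disjoint_xs by blast
    ultimately show ?thesis using P(1,2) xs(1,2) by (intro exI[of _ "insert xs P"]) auto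
  qed
qed

lemma weakly_quasirandom_tight_path_cover:
  fixes \<xi> d \<delta> :: real
  assumes qr: "weakly_quasirandom \<delta> d E U V W"
    and fin: "finite U" "finite V" "finite W"
    and disj: "U \<inter> V = {}" "U \<inter> W = {}" "V \<inter> W = {}"
    and card: "card U = n" "card V = n" "card W = n"
    and "0 \<le> \<xi>" "0 \<le> d" "1 \<le> k" and k_small: "3 * (real k - 1) < (d * \<xi> ^ 3 - \<delta>) * n"
  shows "\<exists>P. finite P \<and> (\<forall>p\<in>P. tight_path (U \<union> V \<union> W) E p \<and> length p = 3 * k)
     \<and> (\<forall>p\<in>P. \<forall>q\<in>P. p \<noteq> q \<longrightarrow> set p \<inter> set q = {})
     \<and> 3 * (real n - \<xi> * n) \<le> card (\<Union>p\<in>P. set p)"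
proof -
  have step: "\<exists>xs. (tight_path (U \<union> V \<union> W) E xs \<and> length xs = 3 * k) \<and> set xs \<subseteq> A \<union> B \<union> C
      \<and> card (set xs \<inter> A) = k \<and> card (set xs \<inter> B) = k \<and> card (set xs \<inter> C) = k"
    if "A \<subseteq> U" "B \<subseteq> V" "C \<subseteq> W" "card B = card A" "card C = card A" "\<xi> * n \<le> card A"
    for A B C
    using balanced_tight_path_in_quasirandom[OF qr fin disj card \<open>0 \<le> \<xi>\<close> \<open>0 \<le> d\<close> \<open>1 \<le> k\<close> k_small
        that(1-3) refl that(4-6)]
    by simp
  have "0 < k" using \<open>1 \<le> k\<close> by simp
  have "\<exists>P. finite P
      \<and> (\<forall>p\<in>P. (tight_path (U \<union> V \<union> W) E p \<and> length p = 3 * k) \<and> set p \<subseteq> U \<union> V \<union> W)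
      \<and> (\<forall>p\<in>P. \<forall>q\<in>P. p \<noteq> q \<longrightarrow> set p \<inter> set q = {})
      \<and> 3 * (real n - \<xi> * n) \<le> card (\<Union>p\<in>P. set p)"
    by (rule greedy_balanced_cover[OF fin disj \<open>0 < k\<close> step]) (simp_all add: card)
  then show ?thesis by auto
qed

theorem lemma6p2:
  fixes \<xi> d \<delta> :: real and n :: nat
    and U V W :: "'a set" and E :: "'a set set"
  assumes "\<xi> > 0" and "d > 0" and "\<delta> > 0"
    and "(d * \<xi> ^ 3 - \<delta>) / 2 * real n \<ge> 1"
    and "finite U" and "finite V" and "finite W"
    and "U \<inter> V = {}" and "U \<inter> W = {}" and "V \<inter> W = {}"
    and "card U = n" and "card V = n" and "card W = n"
    and "three_graph (U \<union> V \<union> W) E"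
    and "weakly_quasirandom \<delta> d E U V W"
  shows "\<exists>P :: 'a list set. finite P
     \<and> (\<forall>p\<in>P. tight_path (U \<union> V \<union> W) E p
          \<and> real (tight_path_length p) \<ge> (d * \<xi> ^ 3 - \<delta>) / 2 * real n - 2)
     \<and> (\<forall>p\<in>P. \<forall>q\<in>P. p \<noteq> q \<longrightarrow> set p \<inter> set q = {})
     \<and> real (card (\<Union>p\<in>P. set p)) \<ge> (1 - \<xi>) * (3 * real n)"
proof -
  define L where "L = (d * \<xi> ^ 3 - \<delta>) / 2 * real n"
  define k where "k = nat \<lceil>L / 3\<rceil>"
  have "1 \<le> L" "(d * \<xi> ^ 3 - \<delta>) * n = 2 * L" using assms(4) by (simp_all add: L_def)
  moreover from \<open>1 \<le> L\<close> have "1 \<le> k" "L / 3 \<le> real k" "real k < L / 3 + 1"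
    unfolding k_def by linarith+
  ultimately have "L \<le> 3 * real k" and k_small: "3 * (real k - 1) < (d * \<xi> ^ 3 - \<delta>) * n"
    by argo+
  obtain P where P: "finite P" "\<forall>p\<in>P. tight_path (U \<union> V \<union> W) E p \<and> length p = 3 * k"
    "\<forall>p\<in>P. \<forall>q\<in>P. p \<noteq> q \<longrightarrow> set p \<inter> set q = {}"
    "3 * (real n - \<xi> * n) \<le> card (\<Union>p\<in>P. set p)"
    using weakly_quasirandom_tight_path_cover[OF assms(15,5-13) less_imp_le[OF assms(1)]
        less_imp_le[OF assms(2)] \<open>1 \<le> k\<close> k_small] by blast
  have "L - 2 \<le> tight_path_length p" if "length p = 3 * k" for p :: "'a list"
    using that \<open>L \<le> 3 * real k\<close> \<open>1 \<le> k\<close> by (simp add: tight_path_length_def of_nat_diff)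
  moreover have "(1 - \<xi>) * (3 * real n) = 3 * (real n - \<xi> * n)" by (simp add: algebra_simps)
  ultimately show ?thesis using P unfolding L_def by (intro exI[of _ P]) auto
qed

end
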